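(* There exists an absolute constant $C>0$ such that the following holds for every integer $n\ge 2$. Let $\mathcal{S}$ be a family of $n$ curves in the plane, each colored red or blue, such that every curve is $x$-monotone and no two curves of the same color intersect. Then the number of tangencies between curves of $\mathcal{S}$ is at most $C\, n\log n$.
   Context: A curve is a simple planar curve (Jordan arc), i.e., the image of an injective continuous map from an (open or closed) interval into the plane. A curve is $x$-monotone if every vertical line meets it in at most one point. It is assumed that any two curves intersect in finitely many points and that no three curves pass through a common point. An intersection point $p$ of two curves is a crossing point if there is a Jordan region $D$ containing $p$ but no other intersection point of the two curves in its interior, such that each curve meets the boundary of $D$ in exactly two points and in the cyclic order of these four points no two consecutive points belong to the same curve. Two curves touch at a tangency point $p$ if both contain $p$ in their relative interior, $p$ is their only intersection point, and $p$ is not a crossing point. The number of tangencies is the number of such tangency points (equivalently, of touching pairs of curves). *)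

theory Defs
  imports "HOL-Analysis.Analysis"
begin

text \<open>The curve (as a point set) is gamma ` I, its relative
  interior (the curve without its endpoints) is gamma ` interior I.\<close>

definition curve_param :: "real set \<Rightarrow> (real \<Rightarrow> real \<times> real) \<Rightarrow> bool" where
  "curve_param I \<gamma> \<longleftrightarrow> is_interval I \<and> (open I \<or> closed I) \<and> interior I \<noteq> {}
     \<and> continuous_on I \<gamma> \<and> inj_on \<gamma> I"

definition x_monotone :: "(real \<times> real) set \<Rightarrow> bool" where
  "x_monotone S \<longleftrightarrow> (\<forall>p\<in>S. \<forall>q\<in>S. fst p = fst q \<longrightarrow> p = q)"

definition jordan_region :: "(real \<Rightarrow> real \<times> real) \<Rightarrow> (real \<times> real) set" where
  "jordan_region c = path_image c \<union> inside (path_image c)"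

definition crossing_point :: "(real \<times> real) set \<Rightarrow> (real \<times> real) set \<Rightarrow> real \<times> real \<Rightarrow> bool" where
  "crossing_point A B p \<longleftrightarrow> p \<in> A \<inter> B \<and>
    (\<exists>c. simple_path c \<and> pathfinish c = pathstart c \<and>
       p \<in> interior (jordan_region c) \<and>
       A \<inter> B \<inter> interior (jordan_region c) = {p} \<and>
       (\<exists>s1 s2 s3 s4. 0 \<le> s1 \<and> s1 < s2 \<and> s2 < s3 \<and> s3 < s4 \<and> s4 < 1 \<and>
          ((A \<inter> path_image c = {c s1, c s3} \<and> B \<inter> path_image c = {c s2, c s4}) \<or>
           (B \<inter> path_image c = {c s1, c s3} \<and> A \<inter> path_image c = {c s2, c s4}))))"

definition touching :: "real set \<Rightarrow> (real \<Rightarrow> real \<times> real) \<Rightarrow> real set \<Rightarrow> (real \<Rightarrow> real \<times> real) \<Rightarrow> bool" where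
  "touching I \<gamma> J \<delta> \<longleftrightarrow> (\<exists>p. p \<in> \<gamma> ` interior I \<and> p \<in> \<delta> ` interior J \<and>
      \<gamma> ` I \<inter> \<delta> ` J = {p} \<and> \<not> crossing_point (\<gamma> ` I) (\<delta> ` J) p)"

end

theory Submission
  imports Defs "HOL-Library.Log_Nat"
begin

text \<open>Each x-monotone curve is the graph of a continuous function over the open interval of the
  x-axis onto which its relative interior projects. If a red and a blue curve touch, then over
  their common x-interval one graph lies weakly below the other: otherwise the intermediate value
  theorem places the touching point strictly between two points where the order of the graphs is
  reversed, and a rectangle around it exhibits a crossing.

  Measure x-coordinates by their rank among the at most 2n endpoints of these intervals; every
  curve then covers an interval of ranks in [0, 4n], which has at most two maximal dyadic blocks
  on each of the O(log n) levels. Charge a touching pair to one of its curves c, to a maximal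
  dyadic block of c that contains the rank of the tangency point and is covered by the other
  curve d, and to the side of d on which c lies. If two pairs received the same charge, the other
  curves d and d' would have the same colour, would both be defined over the whole block, and
  would both touch c from the same side; by the intermediate value theorem they would meet.
  Hence there are at most 4n (log2 (4n + 1) + 1) tangencies.\<close>

section \<open>Rectangles as Jordan curves\<close>

definition pair_of_complex :: "complex \<Rightarrow> real \<times> real" where
  "pair_of_complex z = (Re z, Im z)"

lemma linear_pair_of_complex: "linear pair_of_complex"
  unfolding pair_of_complex_def by (intro linearI) (auto simp: scaleR_prod_def)

lemma inj_pair_of_complex: "inj pair_of_complex"
  unfolding pair_of_complex_def inj_def by (simp add: complex_eq_iff)

definition rectangle_path :: "real \<Rightarrow> real \<Rightarrow> real \<Rightarrow> real \<Rightarrow> real \<Rightarrow> real \<times> real" where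
  "rectangle_path a b c d = pair_of_complex \<circ> rectpath (Complex a c) (Complex b d)"

lemma crossing_pointI:
  assumes "simple_path c" "pathfinish c = pathstart c"
    and "A \<inter> B \<inter> interior (jordan_region c) = {p}"
    and "0 \<le> s1" "s1 < s2" "s2 < s3" "s3 < s4" "s4 < 1"
    and "A \<inter> path_image c = {c s1, c s3}" "B \<inter> path_image c = {c s2, c s4}"
  shows "crossing_point A B p"
  using assms unfolding crossing_point_def by blast

context
  fixes a b c d :: real
  assumes ab: "a < b" and cd: "c < d"
begin

lemma simple_path_rectangle_path: "simple_path (rectangle_path a b c d)"
  and pathfinish_rectangle_path: "pathfinish (rectangle_path a b c d) = pathstart (rectangle_path a b c d)"
  using ab cd
  by (auto simp: rectangle_path_def simple_path_linear_image_eq[OF linear_pair_of_complex inj_pair_of_complex]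
      pathstart_compose pathfinish_compose)

lemma path_image_rectangle_path:
  "path_image (rectangle_path a b c d) = {a..b} \<times> {c..d} - {a<..<b} \<times> {c<..<d}"
proof -
  have "pair_of_complex ` path_image (rectpath (Complex a c) (Complex b d)) =
      {a..b} \<times> {c..d} - {a<..<b} \<times> {c<..<d}"
  proof (intro set_eqI iffI)
    fix p
    assume "p \<in> {a..b} \<times> {c..d} - {a<..<b} \<times> {c<..<d}"
    moreover have "p = pair_of_complex (Complex (fst p) (snd p))"
      by (simp add: pair_of_complex_def)
    ultimately show "p \<in> pair_of_complex ` path_image (rectpath (Complex a c) (Complex b d))"
      using ab cd by (force simp: path_image_rectpath)
  qed (use ab cd in \<open>auto simp: path_image_rectpath pair_of_complex_def\<close>)
  then show ?thesis
    by (simp add: rectangle_path_def path_image_compose)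
qed

lemma interior_jordan_region_rectangle_path:
  "interior (jordan_region (rectangle_path a b c d)) = {a<..<b} \<times> {c<..<d}"
proof -
  define R where "R = {a..b} \<times> {c..d}"
  have interior_R: "interior R = {a<..<b} \<times> {c<..<d}"
    using ab cd by (simp add: R_def interior_Times)
  have frontier_R: "frontier R = R - interior R"
    by (simp add: frontier_def R_def closed_Times)
  have "inside (frontier R) = interior R"
    by (rule inside_frontier_eq_interior) (auto simp: R_def bounded_Times convex_Times)
  moreover have "path_image (rectangle_path a b c d) = frontier R"
    unfolding frontier_R interior_R by (simp add: path_image_rectangle_path R_def)
  ultimately have "jordan_region (rectangle_path a b c d) = R"
    using interior_subset[of R] by (auto simp: jordan_region_def frontier_R)
  then show ?thesis
    by (simp add: interior_R)
qed

text \<open>The boundary is traversed counterclockwise from (a, c): the bottom side on [0, 1/2],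
  the right side on [1/2, 3/4], the top side on [3/4, 7/8] and the left side on [7/8, 1].\<close>

lemma rectangle_path_right_side:
  assumes "c < y" "y < d"
  shows "rectangle_path a b c d (((y - c) / (d - c) + 2) / 4) = (b, y)"
proof -
  define t where "t = (y - c) / (d - c)"
  have "0 < t" "t < 1" "c + (d - c) * t = y"
    using assms by (simp_all add: t_def field_simps)
  moreover have "rectangle_path a b c d ((t + 2) / 4) = (b, c + (d - c) * t)"
    using \<open>0 < t\<close> \<open>t < 1\<close>
    by (simp add: rectangle_path_def pair_of_complex_def rectpath_def Let_def joinpaths_def
        linepath_def field_simps)
  ultimately show ?thesis
    by (simp add: t_def)
qed

lemma rectangle_path_left_side:
  assumes "c < y" "y < d"
  shows "rectangle_path a b c d (((d - y) / (d - c) + 7) / 8) = (a, y)"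
proof -
  define t where "t = (d - y) / (d - c)"
  have "0 < t" "t < 1" "d - (d - c) * t = y"
    using assms by (simp_all add: t_def field_simps)
  moreover have "rectangle_path a b c d ((t + 7) / 8) = (a, d - (d - c) * t)"
    using \<open>0 < t\<close> \<open>t < 1\<close>
    by (simp add: rectangle_path_def pair_of_complex_def rectpath_def Let_def joinpaths_def
        linepath_def field_simps)
  ultimately show ?thesis
    by (simp add: t_def)
qed

lemma graph_Int_path_image_rectangle_path:
  fixes A :: "(real \<times> real) set" and f :: "real \<Rightarrow> real"
  assumes graph: "\<And>x y. x \<in> {a..b} \<Longrightarrow> (x, y) \<in> A \<longleftrightarrow> y = f x"
    and inside: "\<And>x. x \<in> {a..b} \<Longrightarrow> c < f x \<and> f x < d"
  shows "A \<inter> path_image (rectangle_path a b c d) = {(a, f a), (b, f b)}"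
proof -
  have "(x, y) \<in> A \<inter> path_image (rectangle_path a b c d) \<longleftrightarrow> (x, y) \<in> {(a, f a), (b, f b)}" for x y
    using graph[of x y] inside[of x] graph[of a] graph[of b] inside[of a] inside[of b] ab
    by (auto simp: path_image_rectangle_path)
  then show ?thesis
    by auto
qed

lemma crossing_point_in_rectangle:
  assumes p: "A \<inter> B \<inter> {a<..<b} \<times> {c<..<d} = {p}"
    and A: "A \<inter> path_image (rectangle_path a b c d) = {(b, yA), (a, yA')}"
    and B: "B \<inter> path_image (rectangle_path a b c d) = {(b, yB), (a, yB')}"
    and right_side: "c < yA" "yA < yB" "yB < d" and left_side: "c < yB'" "yB' < yA'" "yA' < d"
  shows "crossing_point A B p"
proof -
  txt \<open>A meets the right side below B and the left side above B, so the four boundary points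
    alternate.\<close>
  define t where "t y = (y - c) / (d - c)" for y
  define u where "u y = (d - y) / (d - c)" for y
  have D: "0 < d - c"
    using cd by simp
  have tu: "0 < t y" "t y < 1" "0 < u y" "u y < 1" if "c < y" "y < d" for y
    using that D by (simp_all add: t_def u_def field_simps)
  have "t yA < t yB" "u yA' < u yB'"
    using right_side left_side D by (simp_all add: t_def u_def divide_strict_right_mono)
  moreover have "yA < d" "c < yB" "c < yA'" "yB' < d"
    using right_side left_side by linarith+
  ultimately have order: "0 \<le> (t yA + 2) / 4" "(t yA + 2) / 4 < (t yB + 2) / 4"
    "(t yB + 2) / 4 < (u yA' + 7) / 8" "(u yA' + 7) / 8 < (u yB' + 7) / 8" "(u yB' + 7) / 8 < 1"
    using tu[OF right_side(1) \<open>yA < d\<close>] tu[OF \<open>c < yB\<close> right_side(3)]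
      tu[OF \<open>c < yA'\<close> left_side(3)] tu[OF left_side(1) \<open>yB' < d\<close>]
    by simp_all
  have "A \<inter> path_image (rectangle_path a b c d) =
      {rectangle_path a b c d ((t yA + 2) / 4), rectangle_path a b c d ((u yA' + 7) / 8)}"
    "B \<inter> path_image (rectangle_path a b c d) =
      {rectangle_path a b c d ((t yB + 2) / 4), rectangle_path a b c d ((u yB' + 7) / 8)}"
    using A B right_side left_side \<open>yA < d\<close> \<open>c < yB\<close> \<open>c < yA'\<close> \<open>yB' < d\<close>
    by (simp_all add: t_def u_def rectangle_path_right_side rectangle_path_left_side)
  moreover have "A \<inter> B \<inter> interior (jordan_region (rectangle_path a b c d)) = {p}"
    using p by (simp add: interior_jordan_region_rectangle_path)
  ultimately show ?thesis
    using crossing_pointI[OF simple_path_rectangle_path pathfinish_rectangle_path _ order] by blast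
qed

end

lemma crossing_point_commute: "crossing_point A B p \<longleftrightarrow> crossing_point B A p"
  unfolding crossing_point_def Int_commute[of A B] by (simp only: disj_commute)

lemma crossing_point_if_graphs_cross_downwards:
  fixes A B :: "(real \<times> real) set" and f g :: "real \<Rightarrow> real"
  assumes x0: "a < x0" "x0 < b"
    and A_Int_B: "A \<inter> B = {(x0, f x0)}"
    and graph_A: "\<And>x y. x \<in> {a..b} \<Longrightarrow> (x, y) \<in> A \<longleftrightarrow> y = f x"
    and graph_B: "\<And>x y. x \<in> {a..b} \<Longrightarrow> (x, y) \<in> B \<longleftrightarrow> y = g x"
    and cont_f: "continuous_on {a..b} f" and cont_g: "continuous_on {a..b} g"
    and left_end: "g a < f a" and right_end: "f b < g b"
  shows "crossing_point A B (x0, f x0)"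
proof -
  obtain Mf where Mf: "\<And>x. x \<in> {a..b} \<Longrightarrow> \<bar>f x\<bar> \<le> Mf"
    using continuous_on_compact_bound[OF compact_Icc cont_f] by (metis real_norm_def)
  obtain Mg where Mg: "\<And>x. x \<in> {a..b} \<Longrightarrow> \<bar>g x\<bar> \<le> Mg"
    using continuous_on_compact_bound[OF compact_Icc cont_g] by (metis real_norm_def)
  define H where "H = \<bar>Mf\<bar> + \<bar>Mg\<bar> + 1"
  have H: "- H < H"
    by (simp add: H_def add_pos_nonneg)
  have f_bounded: "- H < f x \<and> f x < H" and g_bounded: "- H < g x \<and> g x < H" if "x \<in> {a..b}" for x
    using Mf[OF that] Mg[OF that] by (auto simp: H_def)
  have ab: "a < b" and a: "a \<in> {a..b}" and b: "b \<in> {a..b}"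
    using x0 by auto
  show ?thesis
  proof (rule crossing_point_in_rectangle[OF ab H])
    have "(x0, f x0) \<in> {a<..<b} \<times> {- H<..<H}"
      using x0 f_bounded[of x0] by simp
    then show "A \<inter> B \<inter> {a<..<b} \<times> {- H<..<H} = {(x0, f x0)}"
      using A_Int_B by blast
    show "A \<inter> path_image (rectangle_path a b (- H) H) = {(b, f b), (a, f a)}"
      using graph_Int_path_image_rectangle_path[OF ab H graph_A f_bounded] by (simp add: insert_commute)
    show "B \<inter> path_image (rectangle_path a b (- H) H) = {(b, g b), (a, g a)}"
      using graph_Int_path_image_rectangle_path[OF ab H graph_B g_bounded] by (simp add: insert_commute)
  qed (use f_bounded[OF a] f_bounded[OF b] g_bounded[OF a] g_bounded[OF b] left_end right_end in auto)
qed

lemma crossing_point_if_graphs_cross: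
  fixes A B :: "(real \<times> real) set" and f g :: "real \<Rightarrow> real"
  assumes x0: "a < x0" "x0 < b"
    and A_Int_B: "A \<inter> B = {(x0, f x0)}"
    and graph_A: "\<And>x y. x \<in> {a..b} \<Longrightarrow> (x, y) \<in> A \<longleftrightarrow> y = f x"
    and graph_B: "\<And>x y. x \<in> {a..b} \<Longrightarrow> (x, y) \<in> B \<longleftrightarrow> y = g x"
    and cont_f: "continuous_on {a..b} f" and cont_g: "continuous_on {a..b} g"
    and sign_change: "(g a < f a \<and> f b < g b) \<or> (f a < g a \<and> g b < f b)"
  shows "crossing_point A B (x0, f x0)"
  using sign_change
proof
  assume "g a < f a \<and> f b < g b"
  then show ?thesis
    using crossing_point_if_graphs_cross_downwards[OF x0 A_Int_B graph_A graph_B cont_f cont_g] by simp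
next
  assume up: "f a < g a \<and> g b < f b"
  have "(x0, f x0) \<in> B"
    using A_Int_B by blast
  then have "g x0 = f x0"
    using graph_B[of x0] x0 by simp
  then have "B \<inter> A = {(x0, g x0)}"
    using A_Int_B by (simp add: Int_commute)
  then have "crossing_point B A (x0, g x0)"
    using crossing_point_if_graphs_cross_downwards[OF x0 _ graph_B graph_A cont_g cont_f] up by simp
  then show ?thesis
    using \<open>g x0 = f x0\<close> by (simp add: crossing_point_commute)
qed

section \<open>Monotone curves as graphs\<close>

definition monotone_curve :: "real set \<Rightarrow> (real \<Rightarrow> real \<times> real) \<Rightarrow> bool" where
  "monotone_curve I \<gamma> \<longleftrightarrow> curve_param I \<gamma> \<and> x_monotone (\<gamma> ` I)"

definition x_range :: "real set \<Rightarrow> (real \<Rightarrow> real \<times> real) \<Rightarrow> real set" where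
  "x_range I \<gamma> = (\<lambda>t. fst (\<gamma> t)) ` interior I"

text \<open>Only the values of graph_fun on the projection of the curve matter: elsewhere inv_into
  picks an arbitrary parameter.\<close>

definition graph_fun :: "real set \<Rightarrow> (real \<Rightarrow> real \<times> real) \<Rightarrow> real \<Rightarrow> real" where
  "graph_fun I \<gamma> x = snd (\<gamma> (inv_into I (\<lambda>t. fst (\<gamma> t)) x))"

context
  fixes I :: "real set" and \<gamma> :: "real \<Rightarrow> real \<times> real"
  assumes monotone: "monotone_curve I \<gamma>"
begin

lemma inj_on_fst_curve: "inj_on (\<lambda>t. fst (\<gamma> t)) I"
  using monotone unfolding monotone_curve_def curve_param_def x_monotone_def inj_on_def by blast

lemma continuous_on_fst_curve: "continuous_on I (\<lambda>t. fst (\<gamma> t))"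
  and continuous_on_snd_curve: "continuous_on I (\<lambda>t. snd (\<gamma> t))"
  using monotone unfolding monotone_curve_def curve_param_def by (auto intro: continuous_intros)

lemma graph_fun_fst_curve: "t \<in> I \<Longrightarrow> graph_fun I \<gamma> (fst (\<gamma> t)) = snd (\<gamma> t)"
  by (simp add: graph_fun_def inv_into_f_f[OF inj_on_fst_curve])

lemma mem_curve_iff_graph_fun:
  assumes "x \<in> x_range I \<gamma>"
  shows "(x, y) \<in> \<gamma> ` I \<longleftrightarrow> y = graph_fun I \<gamma> x"
proof
  assume "(x, y) \<in> \<gamma> ` I"
  then obtain s where "s \<in> I" "\<gamma> s = (x, y)"
    by auto
  then show "y = graph_fun I \<gamma> x"
    using graph_fun_fst_curve by force
next
  obtain t where t: "t \<in> I" "x = fst (\<gamma> t)"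
    using assms interior_subset unfolding x_range_def by blast
  assume "y = graph_fun I \<gamma> x"
  then have "\<gamma> t = (x, y)"
    using graph_fun_fst_curve[OF t(1)] t(2) by (simp add: prod_eq_iff)
  then show "(x, y) \<in> \<gamma> ` I"
    using t(1) by force
qed

lemma curve_interior_point:
  assumes "p \<in> \<gamma> ` interior I"
  shows "fst p \<in> x_range I \<gamma>" "snd p = graph_fun I \<gamma> (fst p)"
  using assms graph_fun_fst_curve[OF interior_subset[THEN subsetD]] unfolding x_range_def by auto

lemma continuous_on_graph_fun: "continuous_on (x_range I \<gamma>) (graph_fun I \<gamma>)"
proof -
  have "path_connected (interior I)"
    using monotone unfolding monotone_curve_def curve_param_def
    by (simp add: is_interval_convex_1 convex_interior convex_imp_path_connected)
  then obtain h where h: "homeomorphism (interior I) (x_range I \<gamma>) (\<lambda>t. fst (\<gamma> t)) h"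
    using homeomorphism_into_1d continuous_on_subset[OF continuous_on_fst_curve interior_subset]
      inj_on_subset[OF inj_on_fst_curve interior_subset]
    unfolding x_range_def by blast
  have "graph_fun I \<gamma> x = snd (\<gamma> (h x))" if "x \<in> x_range I \<gamma>" for x
    using h that interior_subset graph_fun_fst_curve unfolding homeomorphism_def by (metis subsetD image_eqI)
  moreover have "continuous_on (x_range I \<gamma>) (\<lambda>x. snd (\<gamma> (h x)))"
    using h interior_subset unfolding homeomorphism_def
    by (intro continuous_on_compose2[OF continuous_on_snd_curve]) auto
  ultimately show ?thesis
    using continuous_on_eq by force
qed

lemma convex_x_range: "convex (x_range I \<gamma>)"
proof -
  have "connected (interior I)"
    using monotone unfolding monotone_curve_def curve_param_def
    by (simp add: is_interval_convex_1 convex_interior convex_connected)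
  then have "connected (x_range I \<gamma>)"
    unfolding x_range_def
    by (rule connected_continuous_image[OF continuous_on_subset[OF continuous_on_fst_curve interior_subset]])
  then show ?thesis
    by (simp add: connected_convex_1)
qed

end

definition graph_below :: "real set \<Rightarrow> (real \<Rightarrow> real \<times> real) \<Rightarrow> real set \<Rightarrow> (real \<Rightarrow> real \<times> real) \<Rightarrow> bool" where
  "graph_below I \<gamma> J \<delta> \<longleftrightarrow> (\<forall>x \<in> x_range I \<gamma> \<inter> x_range J \<delta>. graph_fun I \<gamma> x \<le> graph_fun J \<delta> x)"

lemma closed_segment_eq_min_max: "closed_segment a b = {min a b..max a b}" for a b :: real
  by (simp add: closed_segment_eq_real_ivl min_def max_def)

lemma common_point_in_closed_segment:
  fixes f g :: "real \<Rightarrow> real"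
  assumes "continuous_on (closed_segment a b) f" "continuous_on (closed_segment a b) g"
    and "f a \<le> g a" "g b \<le> f b"
  obtains z where "z \<in> closed_segment a b" "f z = g z"
proof -
  have "0 \<in> closed_segment (f a - g a) (f b - g b)"
    using assms(3,4) by (simp add: closed_segment_eq_real_ivl)
  moreover have "continuous_on (closed_segment a b) (\<lambda>x. f x - g x)"
    using assms(1,2) by (rule continuous_on_diff)
  ultimately obtain z where "z \<in> closed_segment a b" "f z - g z = 0"
    using IVT'_closed_segment_real[of 0 "\<lambda>x. f x - g x" a b] by auto
  then show ?thesis
    using that by simp
qed

lemma crossing_point_if_graph_order_reverses:
  assumes curve1: "monotone_curve I1 \<gamma>1" and curve2: "monotone_curve I2 \<gamma>2"
    and common: "\<gamma>1 ` I1 \<inter> \<gamma>2 ` I2 = {p}"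
    and a: "a \<in> x_range I1 \<gamma>1 \<inter> x_range I2 \<gamma>2" "graph_fun I2 \<gamma>2 a < graph_fun I1 \<gamma>1 a"
    and b: "b \<in> x_range I1 \<gamma>1 \<inter> x_range I2 \<gamma>2" "graph_fun I1 \<gamma>1 b < graph_fun I2 \<gamma>2 b"
  shows "crossing_point (\<gamma>1 ` I1) (\<gamma>2 ` I2) p"
proof -
  define f1 where "f1 = graph_fun I1 \<gamma>1"
  define f2 where "f2 = graph_fun I2 \<gamma>2"
  define S where "S = closed_segment a b"
  have S: "S \<subseteq> x_range I1 \<gamma>1 \<inter> x_range I2 \<gamma>2"
    using a(1) b(1) convex_x_range[OF curve1] convex_x_range[OF curve2]
    by (simp add: S_def closed_segment_subset convex_Int)
  have graph1: "(x, y) \<in> \<gamma>1 ` I1 \<longleftrightarrow> y = f1 x" and graph2: "(x, y) \<in> \<gamma>2 ` I2 \<longleftrightarrow> y = f2 x"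
    if "x \<in> S" for x y
    using that S mem_curve_iff_graph_fun[OF curve1, of x y] mem_curve_iff_graph_fun[OF curve2, of x y]
    by (auto simp: f1_def f2_def)
  have cont: "continuous_on S f1" "continuous_on S f2"
    using S continuous_on_subset[OF continuous_on_graph_fun[OF curve1]]
      continuous_on_subset[OF continuous_on_graph_fun[OF curve2]]
    by (auto simp: f1_def f2_def)
  obtain x0 where "x0 \<in> S" "f2 x0 = f1 x0"
    using common_point_in_closed_segment[OF cont(2,1)[unfolded S_def]] a(2) b(2)
    by (metis S_def f1_def f2_def less_imp_le)
  then have "(x0, f1 x0) \<in> \<gamma>1 ` I1 \<inter> \<gamma>2 ` I2"
    using graph1 graph2 by simp
  then have p: "p = (x0, f1 x0)"
    using common by (metis singletonD)
  then have "x0 \<noteq> a" "x0 \<noteq> b"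
    using a(2) b(2) \<open>f2 x0 = f1 x0\<close> by (auto simp: f1_def f2_def)
  with \<open>x0 \<in> S\<close> have x0_between: "min a b < x0" "x0 < max a b"
    by (auto simp: S_def closed_segment_eq_min_max)
  have between: "{min a b..max a b} = S"
    by (simp add: S_def closed_segment_eq_min_max)
  show ?thesis
    unfolding p
  proof (rule crossing_point_if_graphs_cross[OF x0_between])
    show "\<gamma>1 ` I1 \<inter> \<gamma>2 ` I2 = {(x0, f1 x0)}"
      using common p by simp
    show "continuous_on {min a b..max a b} f1" "continuous_on {min a b..max a b} f2"
      using cont by (simp_all add: between)
    show "(f2 (min a b) < f1 (min a b) \<and> f1 (max a b) < f2 (max a b)) \<or>
        (f1 (min a b) < f2 (min a b) \<and> f2 (max a b) < f1 (max a b))"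
      using a(2) b(2) by (cases "a \<le> b") (simp_all add: min_def max_def f1_def f2_def)
  qed (use graph1 graph2 between in blast)+
qed

lemma touching_imp_tangent:
  assumes curve1: "monotone_curve I1 \<gamma>1" and curve2: "monotone_curve I2 \<gamma>2"
    and touch: "touching I1 \<gamma>1 I2 \<gamma>2"
  obtains x where "x \<in> x_range I1 \<gamma>1 \<inter> x_range I2 \<gamma>2" "graph_fun I1 \<gamma>1 x = graph_fun I2 \<gamma>2 x"
    "graph_below I1 \<gamma>1 I2 \<gamma>2 \<or> graph_below I2 \<gamma>2 I1 \<gamma>1"
proof -
  obtain p where p: "p \<in> \<gamma>1 ` interior I1" "p \<in> \<gamma>2 ` interior I2"
    and common: "\<gamma>1 ` I1 \<inter> \<gamma>2 ` I2 = {p}" and not_crossing: "\<not> crossing_point (\<gamma>1 ` I1) (\<gamma>2 ` I2) p"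
    using touch unfolding touching_def by blast
  have "fst p \<in> x_range I1 \<gamma>1 \<inter> x_range I2 \<gamma>2" "graph_fun I1 \<gamma>1 (fst p) = graph_fun I2 \<gamma>2 (fst p)"
    using curve_interior_point[OF curve1 p(1)] curve_interior_point[OF curve2 p(2)] by auto
  moreover have "graph_below I1 \<gamma>1 I2 \<gamma>2 \<or> graph_below I2 \<gamma>2 I1 \<gamma>1"
  proof (rule ccontr)
    assume "\<not> ?thesis"
    then obtain a b where "a \<in> x_range I1 \<gamma>1 \<inter> x_range I2 \<gamma>2" "graph_fun I2 \<gamma>2 a < graph_fun I1 \<gamma>1 a"
      "b \<in> x_range I1 \<gamma>1 \<inter> x_range I2 \<gamma>2" "graph_fun I1 \<gamma>1 b < graph_fun I2 \<gamma>2 b"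
      unfolding graph_below_def Int_commute[of "x_range I2 \<gamma>2"] by (auto simp: not_le)
    then show False
      using crossing_point_if_graph_order_reverses[OF curve1 curve2 common] not_crossing by blast
  qed
  ultimately show ?thesis
    using that by blast
qed

lemma same_side_tangents_intersect:
  assumes curve: "monotone_curve I \<gamma>" and curve1: "monotone_curve I1 \<gamma>1"
    and curve2: "monotone_curve I2 \<gamma>2"
    and x1: "x1 \<in> x_range I \<gamma>" "graph_fun I \<gamma> x1 = graph_fun I1 \<gamma>1 x1"
    and x2: "x2 \<in> x_range I \<gamma>" "graph_fun I \<gamma> x2 = graph_fun I2 \<gamma>2 x2"
    and segment: "closed_segment x1 x2 \<subseteq> x_range I1 \<gamma>1 \<inter> x_range I2 \<gamma>2"
    and same_side: "(graph_below I \<gamma> I1 \<gamma>1 \<and> graph_below I \<gamma> I2 \<gamma>2) \<or>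
      (graph_below I1 \<gamma>1 I \<gamma> \<and> graph_below I2 \<gamma>2 I \<gamma>)"
  shows "\<gamma>1 ` I1 \<inter> \<gamma>2 ` I2 \<noteq> {}"
proof -
  define f where "f = graph_fun I \<gamma>"
  define f1 where "f1 = graph_fun I1 \<gamma>1"
  define f2 where "f2 = graph_fun I2 \<gamma>2"
  have ends: "x1 \<in> x_range I2 \<gamma>2" "x2 \<in> x_range I1 \<gamma>1"
    using segment by auto
  have cont1: "continuous_on (closed_segment x1 x2) f1" and cont2: "continuous_on (closed_segment x1 x2) f2"
    using segment continuous_on_subset[OF continuous_on_graph_fun[OF curve1]]
      continuous_on_subset[OF continuous_on_graph_fun[OF curve2]]
    by (auto simp: f1_def f2_def)
  obtain z where z: "z \<in> closed_segment x1 x2" "f1 z = f2 z"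
  proof (cases "graph_below I \<gamma> I1 \<gamma>1 \<and> graph_below I \<gamma> I2 \<gamma>2")
    case True
    then have "f2 x1 \<ge> f1 x1" "f1 x2 \<ge> f2 x2"
      using x1 x2 ends unfolding graph_below_def f_def f1_def f2_def by (metis IntI)+
    then show ?thesis
      using common_point_in_closed_segment[OF cont1 cont2] that by metis
  next
    case False
    then have "f2 x1 \<le> f1 x1" "f1 x2 \<le> f2 x2"
      using same_side x1 x2 ends unfolding graph_below_def f_def f1_def f2_def by (metis IntI)+
    then show ?thesis
      using common_point_in_closed_segment[OF cont2 cont1] that by metis
  qed
  then have "(z, f1 z) \<in> \<gamma>1 ` I1 \<inter> \<gamma>2 ` I2"
    using segment mem_curve_iff_graph_fun[OF curve1] mem_curve_iff_graph_fun[OF curve2]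
    by (auto simp: f1_def f2_def)
  then show ?thesis
    by blast
qed

section \<open>Ranks and dyadic blocks\<close>

lemma finite_card_le_2_if_no_increasing_triple:
  fixes S :: "'a::linorder set"
  assumes "\<And>x y z. x \<in> S \<Longrightarrow> y \<in> S \<Longrightarrow> z \<in> S \<Longrightarrow> x < y \<Longrightarrow> y < z \<Longrightarrow> False"
  shows "finite S \<and> card S \<le> 2"
proof (rule ccontr)
  assume "\<not> (finite S \<and> card S \<le> 2)"
  then obtain T where "T \<subseteq> S" "card T = 3"
    by (metis infinite_arbitrarily_large obtain_subset_with_card_n not_le_imp_less Suc_leI
        numeral_2_eq_2 numeral_3_eq_3)
  then obtain x y z where xyz: "x \<in> S" "y \<in> S" "z \<in> S" "x \<noteq> y" "y \<noteq> z" "x \<noteq> z"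
    by (auto simp: card_3_iff)
  show False
    using xyz assms
    by (cases x y rule: linorder_cases; cases y z rule: linorder_cases; cases x z rule: linorder_cases)
      metis+
qed

lemma finite_card_frontier_le_2:
  fixes U :: "real set"
  assumes "convex U"
  shows "finite (frontier U) \<and> card (frontier U) \<le> 2"
proof (rule finite_card_le_2_if_no_increasing_triple)
  fix a b c
  assume abc: "a \<in> frontier U" "b \<in> frontier U" "c \<in> frontier U" "a < b" "b < c"
  have "closed_segment a c \<subseteq> closure U"
    using abc(1,3) convex_closure[OF assms] by (intro closed_segment_subset) (auto simp: frontier_def)
  then have "{a..c} \<subseteq> closure U"
    using abc(4,5) by (simp add: closed_segment_eq_real_ivl)
  then have "{a<..<c} \<subseteq> interior (closure U)"
    by (intro interior_maximal) auto
  then have "b \<in> interior U"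
    using abc(4,5) convex_interior_closure[OF assms] by auto
  then show False
    using abc(2) by (simp add: frontier_def)
qed

text \<open>Twice the rank of x among the points of E, where a point equal to x counts one half. It is
  constant exactly on the points of E and on the gaps between consecutive points.\<close>

definition half_rank :: "'a::linorder set \<Rightarrow> 'a \<Rightarrow> nat" where
  "half_rank E x = card {e \<in> E. e < x} + card {e \<in> E. e \<le> x}"

lemma half_rank_mono: "finite E \<Longrightarrow> x \<le> z \<Longrightarrow> half_rank E x \<le> half_rank E z"
  unfolding half_rank_def by (intro add_mono card_mono) auto

lemma less_if_half_rank_less: "finite E \<Longrightarrow> half_rank E x < half_rank E z \<Longrightarrow> x < z"
  using half_rank_mono[of E z x] by (meson not_le)

lemma half_rank_le: "finite E \<Longrightarrow> half_rank E x \<le> 2 * card E"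
  unfolding half_rank_def using card_mono[of E "{e \<in> E. e < x}"] card_mono[of E "{e \<in> E. e \<le> x}"]
  by auto

lemma half_rank_eq_imp_no_point_between:
  assumes E: "finite E" and "x < z" and eq: "half_rank E x = half_rank E z"
    and "p \<in> E" "x \<le> p" "p \<le> z"
  shows False
proof -
  have sub: "{d \<in> E. d < x} \<subseteq> {d \<in> E. d < z}" "{d \<in> E. d \<le> x} \<subseteq> {d \<in> E. d \<le> z}"
    using \<open>x < z\<close> by auto
  have "p \<in> {d \<in> E. d < z} - {d \<in> E. d < x} \<or> p \<in> {d \<in> E. d \<le> z} - {d \<in> E. d \<le> x}"
    using \<open>p \<in> E\<close> \<open>x \<le> p\<close> \<open>p \<le> z\<close> \<open>x < z\<close> by (cases "p < z") auto
  then have "{d \<in> E. d < x} \<subset> {d \<in> E. d < z} \<or> {d \<in> E. d \<le> x} \<subset> {d \<in> E. d \<le> z}"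
    using sub by blast
  then have "card {d \<in> E. d < x} < card {d \<in> E. d < z} \<or> card {d \<in> E. d \<le> x} < card {d \<in> E. d \<le> z}"
    using E by (auto intro: psubset_card_mono)
  moreover have "card {d \<in> E. d < x} \<le> card {d \<in> E. d < z}" "card {d \<in> E. d \<le> x} \<le> card {d \<in> E. d \<le> z}"
    using E sub by (simp_all add: card_mono)
  ultimately show False
    using eq by (auto simp: half_rank_def)
qed

lemma mem_if_half_rank_eq:
  fixes U :: "real set"
  assumes E: "finite E" "frontier U \<subseteq> E" and "z \<in> U" and eq: "half_rank E x = half_rank E z"
  shows "x \<in> U"
proof (rule ccontr)
  assume "x \<notin> U"
  then have "closed_segment x z \<inter> frontier U \<noteq> {}"
    using \<open>z \<in> U\<close> by (intro connected_Int_frontier[of "closed_segment x z"]) auto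
  then obtain e where "e \<in> frontier U" "e \<in> closed_segment x z"
    by blast
  then have e: "e \<in> E" "min x z \<le> e" "e \<le> max x z"
    using E(2) by (auto simp: closed_segment_eq_min_max)
  have "x \<noteq> z"
    using \<open>x \<notin> U\<close> \<open>z \<in> U\<close> by blast
  then have lt: "min x z < max x z" and eq': "half_rank E (min x z) = half_rank E (max x z)"
    using eq by (cases "x \<le> z"; simp add: min_def max_def)+
  show False
    by (rule half_rank_eq_imp_no_point_between[OF E(1) lt eq' e])
qed

definition rank_hull :: "'a::linorder set \<Rightarrow> 'a set \<Rightarrow> nat set" where
  "rank_hull E U = {k. \<exists>u \<in> U. \<exists>w \<in> U. half_rank E u \<le> k \<and> k \<le> half_rank E w}"

definition order_convex :: "'a::order set \<Rightarrow> bool" where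
  "order_convex J \<longleftrightarrow> (\<forall>a \<in> J. \<forall>b \<in> J. {a..b} \<subseteq> J)"

lemma half_rank_in_rank_hull: "u \<in> U \<Longrightarrow> half_rank E u \<in> rank_hull E U"
  unfolding rank_hull_def by blast

lemma order_convex_rank_hull: "order_convex (rank_hull E U)"
  unfolding order_convex_def
proof (intro ballI subsetI)
  fix a b k
  assume "a \<in> rank_hull E U" "b \<in> rank_hull E U" "k \<in> {a..b}"
  then obtain u w where "u \<in> U" "w \<in> U" "half_rank E u \<le> a" "b \<le> half_rank E w" "a \<le> k" "k \<le> b"
    unfolding rank_hull_def by auto
  then have "half_rank E u \<le> k" "k \<le> half_rank E w"
    by linarith+
  then show "k \<in> rank_hull E U"
    unfolding rank_hull_def using \<open>u \<in> U\<close> \<open>w \<in> U\<close> by blast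
qed

lemma rank_hull_subset:
  assumes "finite E"
  shows "rank_hull E U \<subseteq> {..2 * card E}"
proof
  fix k
  assume "k \<in> rank_hull E U"
  then obtain w where "k \<le> half_rank E w"
    unfolding rank_hull_def by blast
  then show "k \<in> {..2 * card E}"
    using half_rank_le[OF assms, of w] by simp
qed

lemma mem_if_half_rank_in_rank_hull:
  fixes U :: "real set"
  assumes E: "finite E" "frontier U \<subseteq> E" and "convex U" and y: "half_rank E y \<in> rank_hull E U"
  shows "y \<in> U"
proof -
  obtain u w where "u \<in> U" "w \<in> U" and le: "half_rank E u \<le> half_rank E y" "half_rank E y \<le> half_rank E w"
    using y unfolding rank_hull_def by blast
  show ?thesis
  proof (cases "half_rank E u = half_rank E y \<or> half_rank E y = half_rank E w")
    case True
    then show ?thesis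
      using mem_if_half_rank_eq[OF E] \<open>u \<in> U\<close> \<open>w \<in> U\<close> by metis
  next
    case False
    then have "u < y" "y < w"
      using le less_if_half_rank_less[OF E(1)] by (simp_all add: le_less)
    then have "y \<in> closed_segment u w"
      by (simp add: closed_segment_eq_real_ivl)
    then show ?thesis
      using closed_segment_subset[OF \<open>u \<in> U\<close> \<open>w \<in> U\<close> \<open>convex U\<close>] by blast
  qed
qed

lemma half_rank_in_if_mem_closed_segment:
  fixes x x' y :: real
  assumes "finite E" "order_convex B" "half_rank E x \<in> B" "half_rank E x' \<in> B"
    and "y \<in> closed_segment x x'"
  shows "half_rank E y \<in> B"
proof -
  have "min x x' \<le> y" "y \<le> max x x'"
    using assms(5) by (simp_all add: closed_segment_eq_min_max)
  then have "half_rank E (min x x') \<le> half_rank E y" "half_rank E y \<le> half_rank E (max x x')"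
    by (simp_all add: half_rank_mono[OF assms(1)])
  moreover have "half_rank E (min x x') \<in> B" "half_rank E (max x x') \<in> B"
    using assms(3,4) by (simp_all add: min_def max_def)
  ultimately show ?thesis
    using assms(2) unfolding order_convex_def by (meson atLeastAtMost_iff subsetD)
qed

text \<open>The dyadic blocks of level l partition the natural numbers into intervals of length 2^l,
  and the parent of block (l, q) is block (l + 1, q div 2). The maximal blocks of an interval J
  are the pieces of its segment-tree decomposition.\<close>

definition dyadic_block :: "nat \<Rightarrow> nat \<Rightarrow> nat set" where
  "dyadic_block l q = {q * 2 ^ l ..< (q + 1) * 2 ^ l}"

definition maximal_block :: "nat set \<Rightarrow> nat \<Rightarrow> nat \<Rightarrow> bool" where
  "maximal_block J l q \<longleftrightarrow> dyadic_block l q \<subseteq> J \<and> \<not> dyadic_block (Suc l) (q div 2) \<subseteq> J"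

lemma card_dyadic_block: "card (dyadic_block l q) = 2 ^ l"
  by (simp add: dyadic_block_def algebra_simps)

lemma mem_dyadic_block: "p \<in> dyadic_block l (p div 2 ^ l)"
proof -
  define P :: nat where "P = 2 ^ l"
  have "p div P * P + p mod P = p" "p mod P < P"
    by (rule div_mult_mod_eq) (simp add: P_def)
  then have "p div P * P \<le> p" "p < p div P * P + P"
    by linarith+
  then show ?thesis
    by (simp add: dyadic_block_def P_def[symmetric] algebra_simps)
qed

lemma le_card_if_dyadic_block_subset:
  assumes "dyadic_block l q \<subseteq> J" "finite J"
  shows "2 ^ l \<le> card J"
  using card_mono[OF assms(2,1)] by (simp add: card_dyadic_block)

lemma order_convex_dyadic_block: "order_convex (dyadic_block l q)"
  by (auto simp: order_convex_def dyadic_block_def)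

lemma maximal_block_Int:
  "maximal_block (J1 \<inter> J2) l q \<Longrightarrow> maximal_block J1 l q \<or> maximal_block J2 l q"
  unfolding maximal_block_def by auto

lemma exists_maximal_block:
  assumes "p \<in> J" "finite J"
  obtains l q where "maximal_block J l q" "p \<in> dyadic_block l q"
proof -
  define L where "L = {l. dyadic_block l (p div 2 ^ l) \<subseteq> J}"
  have "L \<subseteq> {..card J}"
  proof
    fix l
    assume "l \<in> L"
    then have "2 ^ l \<le> card J"
      using le_card_if_dyadic_block_subset assms(2) by (simp add: L_def)
    then show "l \<in> {..card J}"
      unfolding atMost_iff using less_exp[of l] by linarith
  qed
  then have "finite L"
    by (rule finite_subset) simp
  moreover have "0 \<in> L"
    using assms(1) by (simp add: L_def dyadic_block_def)
  ultimately have "Max L \<in> L"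
    by (intro Max_in) auto
  moreover have "Suc (Max L) \<notin> L"
    using Max_ge[OF \<open>finite L\<close>, of "Suc (Max L)"] by auto
  moreover have "p div 2 ^ Suc (Max L) = p div 2 ^ Max L div 2"
    by (simp only: power_Suc2 div_mult2_eq)
  ultimately have "maximal_block J (Max L) (p div 2 ^ Max L)"
    by (simp add: maximal_block_def L_def)
  then show ?thesis
    using that mem_dyadic_block by blast
qed

lemma finite_card_maximal_blocks_le_2:
  assumes "order_convex J"
  shows "finite {q. maximal_block J l q} \<and> card {q. maximal_block J l q} \<le> 2"
proof (rule finite_card_le_2_if_no_increasing_triple)
  fix q1 q2 q3
  assume q: "q1 \<in> {q. maximal_block J l q}" "q2 \<in> {q. maximal_block J l q}"
    "q3 \<in> {q. maximal_block J l q}" "q1 < q2" "q2 < q3"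
  define P :: nat where "P = 2 ^ l"
  have P: "0 < P"
    by (simp add: P_def)
  have "q1 * P \<in> dyadic_block l q1" "(q3 + 1) * P - 1 \<in> dyadic_block l q3"
    using P by (auto simp: dyadic_block_def P_def[symmetric] algebra_simps)
  then have ends: "q1 * P \<in> J" "(q3 + 1) * P - 1 \<in> J"
    using q(1,3) by (auto simp: maximal_block_def)
  have "q1 \<le> 2 * (q2 div 2)" "2 * (q2 div 2) + 2 \<le> q3 + 1"
    using q(4,5) by linarith+
  then have mono: "q1 * P \<le> 2 * (q2 div 2) * P" "(2 * (q2 div 2) + 2) * P \<le> (q3 + 1) * P"
    by (meson mult_le_mono1)+
  txt \<open>The parent of the middle block lies between the two outer blocks.\<close>
  have parent: "dyadic_block (Suc l) (q2 div 2) = {2 * (q2 div 2) * P ..< (2 * (q2 div 2) + 2) * P}"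
    by (simp add: dyadic_block_def P_def algebra_simps)
  have "dyadic_block (Suc l) (q2 div 2) \<subseteq> {q1 * P .. (q3 + 1) * P - 1}"
  proof
    fix k
    assume "k \<in> dyadic_block (Suc l) (q2 div 2)"
    then have "2 * (q2 div 2) * P \<le> k" "k < (2 * (q2 div 2) + 2) * P"
      unfolding parent by (simp_all only: atLeastLessThan_iff)
    then show "k \<in> {q1 * P .. (q3 + 1) * P - 1}"
      using mono unfolding atLeastAtMost_iff add_mult_distrib by arith
  qed
  then have "dyadic_block (Suc l) (q2 div 2) \<subseteq> J"
    using assms ends by (auto simp: order_convex_def)
  then show False
    using q(2) by (simp add: maximal_block_def)
qed

section \<open>Counting tangencies\<close>

lemma four_times_floorlog_le_ln:
  fixes n :: nat
  assumes "2 \<le> n"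
  shows "real (4 * n * floorlog 2 (4 * n + 1)) \<le> 30 * real n * ln (real n)"
proof -
  have n: "2 \<le> real n"
    using assms by simp
  have "(2::real) ^ 4 \<le> real n ^ 4"
    using n by (intro power_mono) auto
  then have "real n * 2 ^ 4 \<le> real n * real n ^ 4"
    using n by (intro mult_left_mono) auto
  then have "real n * 16 \<le> real n ^ 5"
    by (simp add: eval_nat_numeral)
  then have "8 * real n + 2 \<le> real n ^ 5"
    using n by linarith
  have "real (floorlog 2 (4 * n + 1)) \<le> log 2 (4 * real n + 1) + 1"
    by (simp add: floorlog_def add.commute)
  also have "\<dots> = log 2 (8 * real n + 2)"
    using log_mult[of 2 2 "4 * real n + 1"] by (simp add: algebra_simps)
  also have "\<dots> \<le> log 2 (real n ^ 5)"
    using \<open>8 * real n + 2 \<le> real n ^ 5\<close> n by (subst log_le_cancel_iff) auto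
  also have "\<dots> = 5 * ln (real n) / ln 2"
    using n by (simp add: log_def ln_realpow)
  also have "\<dots> \<le> 15 / 2 * ln (real n)"
    using ln2_ge_two_thirds n by (simp add: field_simps)
  finally have "real (floorlog 2 (4 * n + 1)) \<le> 15 / 2 * ln (real n)" .
  then show ?thesis
    using n by simp
qed

locale bicolored_monotone_curves =
  fixes n :: nat and I :: "nat \<Rightarrow> real set" and \<gamma> :: "nat \<Rightarrow> real \<Rightarrow> real \<times> real"
    and red :: "nat \<Rightarrow> bool"
  assumes monotone_curve: "\<And>i. i < n \<Longrightarrow> monotone_curve (I i) (\<gamma> i)"
    and disjoint_if_same_color:
      "\<And>i j. i < n \<Longrightarrow> j < n \<Longrightarrow> i \<noteq> j \<Longrightarrow> red i = red j \<Longrightarrow> \<gamma> i ` I i \<inter> \<gamma> j ` I j = {}"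
begin

abbreviation U :: "nat \<Rightarrow> real set" where
  "U i \<equiv> x_range (I i) (\<gamma> i)"

abbreviation F :: "nat \<Rightarrow> real \<Rightarrow> real" where
  "F i \<equiv> graph_fun (I i) (\<gamma> i)"

abbreviation below :: "nat \<Rightarrow> nat \<Rightarrow> bool" where
  "below i j \<equiv> graph_below (I i) (\<gamma> i) (I j) (\<gamma> j)"

definition endpoints :: "real set" where
  "endpoints = (\<Union>i<n. frontier (U i))"

definition ranks :: "nat \<Rightarrow> nat set" where
  "ranks i = rank_hull endpoints (U i)"

lemma finite_endpoints: "finite endpoints"
  and card_endpoints_le: "card endpoints \<le> 2 * n"
proof -
  have frontier: "finite (frontier (U i)) \<and> card (frontier (U i)) \<le> 2" if "i < n" for i
    using finite_card_frontier_le_2 convex_x_range monotone_curve that by blast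
  then show "finite endpoints"
    by (simp add: endpoints_def)
  have "card endpoints \<le> (\<Sum>i<n. card (frontier (U i)))"
    unfolding endpoints_def by (rule card_UN_le) simp
  also have "\<dots> \<le> (\<Sum>i<n. 2)"
    using frontier by (intro sum_mono) auto
  finally show "card endpoints \<le> 2 * n"
    by simp
qed

lemma ranks_subset: "ranks i \<subseteq> {..4 * n}"
  using rank_hull_subset[OF finite_endpoints] card_endpoints_le by (fastforce simp: ranks_def)

lemma finite_ranks: "finite (ranks i)"
  using ranks_subset finite_subset by blast

lemma card_ranks_le: "card (ranks i) \<le> 4 * n + 1"
  using card_mono[OF _ ranks_subset] by fastforce

lemma mem_x_range_if_rank_in_ranks:
  assumes "i < n" "half_rank endpoints y \<in> ranks i"
  shows "y \<in> U i"
proof (rule mem_if_half_rank_in_rank_hull[OF finite_endpoints])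
  show "frontier (U i) \<subseteq> endpoints"
    unfolding endpoints_def using assms(1) by blast
  show "convex (U i)"
    by (rule convex_x_range[OF monotone_curve[OF assms(1)]])
  show "half_rank endpoints y \<in> rank_hull endpoints (U i)"
    using assms(2) by (simp add: ranks_def)
qed

lemma touching_imp_different_colors:
  assumes "i < n" "j < n" "i \<noteq> j" "touching (I i) (\<gamma> i) (I j) (\<gamma> j)"
  shows "red i \<noteq> red j"
proof -
  obtain p where "\<gamma> i ` I i \<inter> \<gamma> j ` I j = {p}"
    using assms(4) unfolding touching_def by blast
  then show ?thesis
    using disjoint_if_same_color[OF assms(1-3)] by auto
qed

definition charged :: "nat \<Rightarrow> nat \<Rightarrow> nat \<Rightarrow> nat \<Rightarrow> bool \<Rightarrow> bool" where
  "charged c d l q s \<longleftrightarrow> maximal_block (ranks c) l q \<and> dyadic_block l q \<subseteq> ranks d \<and>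
    (\<exists>x \<in> U c \<inter> U d. F c x = F d x \<and> half_rank endpoints x \<in> dyadic_block l q) \<and>
    (below c d \<or> below d c) \<and> (s \<longleftrightarrow> below c d)"

lemma touching_imp_charged:
  assumes "i < n" "j < n" "touching (I i) (\<gamma> i) (I j) (\<gamma> j)"
  shows "\<exists>l q s. charged i j l q s \<or> charged j i l q s"
proof -
  obtain x where x: "x \<in> U i \<inter> U j" "F i x = F j x" and side: "below i j \<or> below j i"
    using touching_imp_tangent[OF monotone_curve[OF assms(1)] monotone_curve[OF assms(2)] assms(3)]
    by blast
  have "half_rank endpoints x \<in> ranks i \<inter> ranks j"
    using x(1) by (simp add: ranks_def half_rank_in_rank_hull)
  moreover have "finite (ranks i \<inter> ranks j)"
    by (simp add: finite_ranks)
  ultimately obtain l q where max: "maximal_block (ranks i \<inter> ranks j) l q"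
    and block: "half_rank endpoints x \<in> dyadic_block l q"
    by (rule exists_maximal_block)
  have sub: "dyadic_block l q \<subseteq> ranks i" "dyadic_block l q \<subseteq> ranks j"
    using max by (auto simp: maximal_block_def)
  from maximal_block_Int[OF max] show ?thesis
  proof
    assume "maximal_block (ranks i) l q"
    then have "charged i j l q (below i j)"
      unfolding charged_def using sub x block side by blast
    then show ?thesis
      by blast
  next
    assume "maximal_block (ranks j) l q"
    then have "charged j i l q (below j i)"
      unfolding charged_def using sub x block side by (metis IntE IntI)
    then show ?thesis
      by blast
  qed
qed

lemma charged_level_bound: "charged c d l q s \<Longrightarrow> 2 ^ l \<le> 4 * n + 1"
  using le_card_if_dyadic_block_subset[OF _ finite_ranks] card_ranks_le
  by (fastforce simp: charged_def maximal_block_def intro: order_trans)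

lemma charged_unique:
  assumes "c < n" "d < n" "d' < n" "red d = red d'"
    and charged: "charged c d l q s" "charged c d' l q s"
  shows "d = d'"
proof (rule ccontr)
  assume "d \<noteq> d'"
  then have disjoint: "\<gamma> d ` I d \<inter> \<gamma> d' ` I d' = {}"
    using disjoint_if_same_color assms by blast
  obtain x x' where x: "x \<in> U c" "F c x = F d x" "half_rank endpoints x \<in> dyadic_block l q"
    and x': "x' \<in> U c" "F c x' = F d' x'" "half_rank endpoints x' \<in> dyadic_block l q"
    using charged unfolding charged_def by blast
  have "closed_segment x x' \<subseteq> U d \<inter> U d'"
  proof
    fix y
    assume "y \<in> closed_segment x x'"
    then have "half_rank endpoints y \<in> dyadic_block l q"
      using half_rank_in_if_mem_closed_segment[OF finite_endpoints order_convex_dyadic_block x(3) x'(3)]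
      by blast
    then show "y \<in> U d \<inter> U d'"
      using charged mem_x_range_if_rank_in_ranks assms(2,3) by (auto simp: charged_def)
  qed
  moreover have "(below c d \<and> below c d') \<or> (below d c \<and> below d' c)"
    using charged unfolding charged_def by blast
  ultimately show False
    using same_side_tangents_intersect[OF monotone_curve monotone_curve monotone_curve, of c d d']
      assms(1-3) x x' disjoint by blast
qed

definition touching_pairs :: "(nat \<times> nat) set" where
  "touching_pairs = {(i, j). i < j \<and> j < n \<and> touching (I i) (\<gamma> i) (I j) (\<gamma> j)}"

definition charges :: "nat \<times> nat \<Rightarrow> nat \<times> nat \<times> nat \<times> bool \<Rightarrow> bool" where
  "charges = (\<lambda>(i, j) (c, l, q, s). (c = i \<and> charged i j l q s) \<or> (c = j \<and> charged j i l q s))"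

definition charge_keys :: "(nat \<times> nat \<times> nat \<times> bool) set" where
  "charge_keys = (SIGMA c:{..<n}. SIGMA l:{..<floorlog 2 (4 * n + 1)}.
     {q. maximal_block (ranks c) l q} \<times> (UNIV :: bool set))"

lemma finite_card_charge_keys: "finite charge_keys \<and> card charge_keys \<le> 4 * n * floorlog 2 (4 * n + 1)"
proof -
  have blocks: "finite {q. maximal_block (ranks c) l q} \<and> card {q. maximal_block (ranks c) l q} \<le> 2" for c l
    using finite_card_maximal_blocks_le_2[OF order_convex_rank_hull] by (simp add: ranks_def)
  have "card charge_keys = (\<Sum>c<n. \<Sum>l<floorlog 2 (4 * n + 1). card {q. maximal_block (ranks c) l q} * 2)"
    using blocks by (simp add: charge_keys_def card_SigmaI card_cartesian_product)
  also have "\<dots> \<le> (\<Sum>c<n. \<Sum>l<floorlog 2 (4 * n + 1). 4)"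
    using blocks by (intro sum_mono) fastforce
  finally show ?thesis
    using blocks by (simp add: charge_keys_def)
qed

lemma touching_pair_charged:
  assumes "(i, j) \<in> touching_pairs"
  obtains k where "k \<in> charge_keys" "charges (i, j) k"
proof -
  have ij: "i < n" "j < n" "touching (I i) (\<gamma> i) (I j) (\<gamma> j)"
    using assms by (auto simp: touching_pairs_def)
  have key: "(c, l, q, s) \<in> charge_keys" if "c < n" "charged c d l q s" for c d l q s
  proof -
    have "Suc l \<le> floorlog 2 (4 * n + 1)"
      using floorlog_ge_SucI[OF charged_level_bound[OF that(2)]] by simp
    then show ?thesis
      using that by (simp add: charge_keys_def charged_def)
  qed
  obtain l q s where "charged i j l q s \<or> charged j i l q s"
    using touching_imp_charged[OF ij] by blast
  then show ?thesis
  proof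
    assume "charged i j l q s"
    then show ?thesis
      using that[of "(i, l, q, s)"] key[OF ij(1)] by (simp add: charges_def)
  next
    assume "charged j i l q s"
    then show ?thesis
      using that[of "(j, l, q, s)"] key[OF ij(2)] by (simp add: charges_def)
  qed
qed

lemma charges_imp_charged_partner:
  assumes "(i, j) \<in> touching_pairs" "charges (i, j) (c, l, q, s)"
  obtains d where "d < n" "red d \<noteq> red c" "charged c d l q s" "(i, j) = (min c d, max c d)"
proof -
  have ij: "i < j" "j < n" "red i \<noteq> red j"
    using assms(1) touching_imp_different_colors by (auto simp: touching_pairs_def)
  consider "c = i" "charged i j l q s" | "c = j" "charged j i l q s"
    using assms(2) by (auto simp: charges_def)
  then show ?thesis
  proof cases
    case 1
    then show ?thesis
      using that[of j] ij by simp
  next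
    case 2
    then show ?thesis
      using that[of i] ij by (simp add: min_def max_def)
  qed
qed

lemma charges_injective:
  assumes "p1 \<in> touching_pairs" "p2 \<in> touching_pairs" "charges p1 k" "charges p2 k"
  shows "p1 = p2"
proof -
  obtain c l q s where k: "k = (c, l, q, s)"
    by (cases k) auto
  obtain d1 where d1: "d1 < n" "red d1 \<noteq> red c" "charged c d1 l q s" "p1 = (min c d1, max c d1)"
    using charges_imp_charged_partner assms(1,3) k by (metis prod.collapse)
  obtain d2 where d2: "d2 < n" "red d2 \<noteq> red c" "charged c d2 l q s" "p2 = (min c d2, max c d2)"
    using charges_imp_charged_partner assms(2,4) k by (metis prod.collapse)
  have "c < n"
    using assms(1) d1(4) by (auto simp: touching_pairs_def min_def max_def split: if_splits)
  then have "d1 = d2"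
    using charged_unique d1 d2 by (metis (full_types))
  then show ?thesis
    using d1(4) d2(4) by simp
qed

lemma card_touching_pairs_le: "card touching_pairs \<le> 4 * n * floorlog 2 (4 * n + 1)"
proof -
  have "card touching_pairs \<le> card charge_keys"
  proof (rule card_le_if_inj_on_rel[where r = charges])
    show "finite charge_keys"
      using finite_card_charge_keys by simp
    show "\<exists>k. k \<in> charge_keys \<and> charges p k" if "p \<in> touching_pairs" for p
      using touching_pair_charged[of "fst p" "snd p"] that by (metis prod.collapse)
  qed (use charges_injective in blast)
  then show ?thesis
    using finite_card_charge_keys by linarith
qed

end

theorem theorem1:
  shows "\<exists>C>0. \<forall>n::nat. n \<ge> 2 \<longrightarrow>
    (\<forall>(I :: nat \<Rightarrow> real set) (\<gamma> :: nat \<Rightarrow> real \<Rightarrow> real \<times> real) (red :: nat \<Rightarrow> bool).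
      (\<forall>i<n. curve_param (I i) (\<gamma> i)) \<and>
      (\<forall>i<n. x_monotone (\<gamma> i ` I i)) \<and>
      (\<forall>i<n. \<forall>j<n. i \<noteq> j \<longrightarrow> finite (\<gamma> i ` I i \<inter> \<gamma> j ` I j)) \<and>
      (\<forall>i<n. \<forall>j<n. \<forall>k<n. i \<noteq> j \<and> j \<noteq> k \<and> i \<noteq> k \<longrightarrow>
          \<gamma> i ` I i \<inter> \<gamma> j ` I j \<inter> \<gamma> k ` I k = {}) \<and>
      (\<forall>i<n. \<forall>j<n. i \<noteq> j \<and> red i = red j \<longrightarrow> \<gamma> i ` I i \<inter> \<gamma> j ` I j = {})
      \<longrightarrow> real (card {(i, j). i < j \<and> j < n \<and> touching (I i) (\<gamma> i) (I j) (\<gamma> j)})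
            \<le> C * real n * ln (real n))"
proof -
  have "real (card {(i, j). i < j \<and> j < n \<and> touching (I i) (\<gamma> i) (I j) (\<gamma> j)})
      \<le> 30 * real n * ln (real n)"
    if "2 \<le> n" "\<forall>i<n. curve_param (I i) (\<gamma> i)" "\<forall>i<n. x_monotone (\<gamma> i ` I i)"
      "\<forall>i<n. \<forall>j<n. i \<noteq> j \<and> red i = red j \<longrightarrow> \<gamma> i ` I i \<inter> \<gamma> j ` I j = {}"
    for n I \<gamma> and red :: "nat \<Rightarrow> bool"
  proof -
    interpret bicolored_monotone_curves n I \<gamma> red
      using that(2-4) by unfold_locales (auto simp: monotone_curve_def)
    have "real (card {(i, j). i < j \<and> j < n \<and> touching (I i) (\<gamma> i) (I j) (\<gamma> j)})
        \<le> real (4 * n * floorlog 2 (4 * n + 1))"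
      using card_touching_pairs_le unfolding touching_pairs_def by (simp only: of_nat_le_iff)
    also have "\<dots> \<le> 30 * real n * ln (real n)"
      using four_times_floorlog_le_ln[OF that(1)] .
    finally show ?thesis .
  qed
  then show ?thesis
    by (intro exI[of _ 30]) auto
qed

end
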